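(* Let $G=(V,E)$ be an infinite, connected, locally finite, vertex-transitive graph, $o\in V$, $\Gamma\subset\operatorname{Aut}(G)$ a group acting transitively on $V$, and $\mathbb{P}$ a $\Gamma$-invariant and ergodic probability measure on $\mathbb{R}^V$ with $\mathbb{E}|s(o)|<\infty$. If $\mathbb{E}\,s(o)>1$, then $\mathbb{P}\{s\text{ stabilizes}\}=0$.
   Context: $\Delta u(x)=\sum_{y\sim x}(u(y)-u(x))$. $s:V\to\mathbb{R}$ stabilizes if there exists $f:V\to[0,\infty)$ with $s+\Delta f\le1$ pointwise. $\Gamma$-invariance means $T_\alpha s$ has law $\mathbb{P}$ whenever $s$ does, where $(T_\alpha f)(x)=f(\alpha^{-1}x)$, $\alpha\in\Gamma$; ergodicity is with respect to this $\Gamma$-action. *)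

theory Defs
  imports "HOL-Probability.Probability"
begin

definition simple_graph :: "('v \<Rightarrow> 'v \<Rightarrow> bool) \<Rightarrow> bool" where
  "simple_graph E \<longleftrightarrow> (\<forall>x y. E x y \<longrightarrow> E y x) \<and> (\<forall>x. \<not> E x x)"

definition locally_finite :: "('v \<Rightarrow> 'v \<Rightarrow> bool) \<Rightarrow> bool" where
  "locally_finite E \<longleftrightarrow> (\<forall>x. finite {y. E x y})"

definition connected_graph :: "('v \<Rightarrow> 'v \<Rightarrow> bool) \<Rightarrow> bool" where
  "connected_graph E \<longleftrightarrow> (\<forall>x y. E\<^sup>*\<^sup>* x y)"

definition graph_aut :: "('v \<Rightarrow> 'v \<Rightarrow> bool) \<Rightarrow> ('v \<Rightarrow> 'v) \<Rightarrow> bool" where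
  "graph_aut E \<alpha> \<longleftrightarrow> bij \<alpha> \<and> (\<forall>x y. E x y \<longleftrightarrow> E (\<alpha> x) (\<alpha> y))"

definition vertex_transitive :: "('v \<Rightarrow> 'v \<Rightarrow> bool) \<Rightarrow> bool" where
  "vertex_transitive E \<longleftrightarrow> (\<forall>x y. \<exists>\<alpha>. graph_aut E \<alpha> \<and> \<alpha> x = y)"

definition aut_subgroup :: "('v \<Rightarrow> 'v \<Rightarrow> bool) \<Rightarrow> ('v \<Rightarrow> 'v) set \<Rightarrow> bool" where
  "aut_subgroup E \<Gamma> \<longleftrightarrow> (\<forall>\<alpha>\<in>\<Gamma>. graph_aut E \<alpha>) \<and> id \<in> \<Gamma> \<and>
     (\<forall>\<alpha>\<in>\<Gamma>. \<forall>\<beta>\<in>\<Gamma>. \<alpha> \<circ> \<beta> \<in> \<Gamma>) \<and> (\<forall>\<alpha>\<in>\<Gamma>. inv \<alpha> \<in> \<Gamma>)"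

definition transitive_action :: "('v \<Rightarrow> 'v) set \<Rightarrow> bool" where
  "transitive_action \<Gamma> \<longleftrightarrow> (\<forall>x y. \<exists>\<alpha>\<in>\<Gamma>. \<alpha> x = y)"

definition shift :: "('v \<Rightarrow> 'v) \<Rightarrow> ('v \<Rightarrow> 'a) \<Rightarrow> ('v \<Rightarrow> 'a)" where
  "shift \<alpha> f = (\<lambda>x. f (inv \<alpha> x))"

definition config_space :: "('v \<Rightarrow> real) measure" where
  "config_space = PiM UNIV (\<lambda>_. borel)"

definition gamma_invariant :: "('v \<Rightarrow> 'v) set \<Rightarrow> ('v \<Rightarrow> real) measure \<Rightarrow> bool" where
  "gamma_invariant \<Gamma> M \<longleftrightarrow> (\<forall>\<alpha>\<in>\<Gamma>. distr M M (shift \<alpha>) = M)"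

definition gamma_ergodic :: "('v \<Rightarrow> 'v) set \<Rightarrow> ('v \<Rightarrow> real) measure \<Rightarrow> bool" where
  "gamma_ergodic \<Gamma> M \<longleftrightarrow> (\<forall>A\<in>sets M.
      (\<forall>\<alpha>\<in>\<Gamma>. shift \<alpha> -` A \<inter> space M = A) \<longrightarrow> measure M A = 0 \<or> measure M A = 1)"

definition laplacian :: "('v \<Rightarrow> 'v \<Rightarrow> bool) \<Rightarrow> ('v \<Rightarrow> real) \<Rightarrow> 'v \<Rightarrow> real" where
  "laplacian E u x = (\<Sum>y\<in>{y. E x y}. u y - u x)"

definition stabilizes :: "('v \<Rightarrow> 'v \<Rightarrow> bool) \<Rightarrow> ('v \<Rightarrow> real) \<Rightarrow> bool" where
  "stabilizes E s \<longleftrightarrow> (\<exists>f::'v \<Rightarrow> real. (\<forall>x. f x \<ge> 0) \<and> (\<forall>x. s x + laplacian E f x \<le> 1))"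

end

theory Submission
  imports Defs
begin

text \<open>For a cap \<open>k\<close>, monotone iteration from \<open>0\<close> yields a function \<open>0 \<le> h\<^sub>k \<le> k\<close> with
\<open>s + \<Delta>h\<^sub>k \<le> 1\<close> wherever \<open>h\<^sub>k < k\<close>, and below every stabilizing odometer \<open>f\<close>. So on the
stabilizing event \<open>h\<^sub>k(x) < k\<close> for all large \<open>k\<close>, at every \<open>x\<close>; that event is
\<open>\<Gamma>\<close>-invariant, hence has probability \<open>0\<close> or \<open>1\<close>. By invariance the mean of \<open>\<Delta>h\<^sub>k(o)\<close>
is \<open>0\<close>, while \<open>\<Delta>h\<^sub>k(o) \<le> 1 - s(o)\<close> where \<open>h\<^sub>k(o) < k\<close> and \<open>\<Delta>h\<^sub>k(o) \<le> 0\<close> where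
\<open>h\<^sub>k(o) = k\<close>. If the event had probability \<open>1\<close>, dominated convergence in \<open>k\<close> would give
\<open>0 \<le> 1 - E s(o)\<close>.\<close>

definition neighbours :: "('v \<Rightarrow> 'v \<Rightarrow> bool) \<Rightarrow> 'v \<Rightarrow> 'v set" where
  "neighbours E x = {y. E x y}"

text \<open>The value at \<open>x\<close> solving \<open>s x + \<Delta>g x = 1\<close> with \<open>g\<close> fixed off \<open>x\<close>, clamped to
\<open>[0, k]\<close>; at a vertex of degree \<open>0\<close> it is \<open>0\<close>, since \<open>t / 0 = 0\<close>.\<close>
definition odometer_step ::
    "('v \<Rightarrow> 'v \<Rightarrow> bool) \<Rightarrow> real \<Rightarrow> ('v \<Rightarrow> real) \<Rightarrow> ('v \<Rightarrow> real) \<Rightarrow> 'v \<Rightarrow> real" where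
  "odometer_step E k s g x =
     min k (max 0 ((s x - 1 + (\<Sum>y\<in>neighbours E x. g y)) / real (card (neighbours E x))))"

definition odometer_approx ::
    "('v \<Rightarrow> 'v \<Rightarrow> bool) \<Rightarrow> real \<Rightarrow> ('v \<Rightarrow> real) \<Rightarrow> nat \<Rightarrow> 'v \<Rightarrow> real" where
  "odometer_approx E k s n = (odometer_step E k s ^^ n) (\<lambda>_. 0)"

definition truncated_odometer :: "('v \<Rightarrow> 'v \<Rightarrow> bool) \<Rightarrow> real \<Rightarrow> ('v \<Rightarrow> real) \<Rightarrow> 'v \<Rightarrow> real" where
  "truncated_odometer E k s x = lim (\<lambda>n. odometer_approx E k s n x)"

lemma odometer_approx_0: "odometer_approx E k s 0 = (\<lambda>_. 0)"
  by (simp add: odometer_approx_def)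

lemma odometer_approx_Suc:
  "odometer_approx E k s (Suc n) = odometer_step E k s (odometer_approx E k s n)"
  by (simp add: odometer_approx_def)

lemma odometer_step_mono:
  assumes "\<And>y. g y \<le> g' y"
  shows "odometer_step E k s g x \<le> odometer_step E k s g' x"
proof -
  have "(\<Sum>y\<in>neighbours E x. g y) \<le> (\<Sum>y\<in>neighbours E x. g' y)"
    by (rule sum_mono) (use assms in auto)
  then have "(s x - 1 + (\<Sum>y\<in>neighbours E x. g y)) / real (card (neighbours E x))
      \<le> (s x - 1 + (\<Sum>y\<in>neighbours E x. g' y)) / real (card (neighbours E x))"
    by (intro divide_right_mono) auto
  then show ?thesis
    unfolding odometer_step_def by linarith
qed

lemma odometer_step_bounds:
  "0 \<le> k \<Longrightarrow> 0 \<le> odometer_step E k s g x \<and> odometer_step E k s g x \<le> k"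
  unfolding odometer_step_def by simp

lemma odometer_approx_bounds:
  "0 \<le> k \<Longrightarrow> 0 \<le> odometer_approx E k s n x \<and> odometer_approx E k s n x \<le> k"
  by (cases n) (auto simp: odometer_approx_0 odometer_approx_Suc odometer_step_bounds)

lemma incseq_odometer_approx:
  assumes "0 \<le> k"
  shows "incseq (\<lambda>n. odometer_approx E k s n x)"
proof -
  have "odometer_approx E k s n x \<le> odometer_approx E k s (Suc n) x" for n x
  proof (induction n arbitrary: x)
    case 0
    show ?case
      using odometer_step_bounds[OF assms, of E s "\<lambda>_. 0" x]
      by (simp add: odometer_approx_0 odometer_approx_Suc)
  next
    case (Suc n)
    show ?case
      unfolding odometer_approx_Suc[of E k s "Suc n"] odometer_approx_Suc[of E k s n]
      by (rule odometer_step_mono) (use Suc in \<open>simp add: odometer_approx_Suc\<close>)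
  qed
  then show ?thesis
    by (intro incseq_SucI)
qed

lemma odometer_approx_tendsto:
  assumes "0 \<le> k"
  shows "(\<lambda>n. odometer_approx E k s n x) \<longlonglongrightarrow> truncated_odometer E k s x"
proof -
  have "Bseq (\<lambda>n. odometer_approx E k s n x)"
    using odometer_approx_bounds[OF assms, of E s _ x] assms
    by (intro BseqI'[where K = k]) (simp add: abs_le_iff)
  then have "convergent (\<lambda>n. odometer_approx E k s n x)"
    by (rule Bseq_monoseq_convergent[OF _ incseq_imp_monoseq[OF incseq_odometer_approx[OF assms]]])
  then show ?thesis
    unfolding truncated_odometer_def by (simp add: convergent_LIMSEQ_iff)
qed

lemma truncated_odometer_bounds:
  assumes "0 \<le> k"
  shows "0 \<le> truncated_odometer E k s x \<and> truncated_odometer E k s x \<le> k"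
  using odometer_approx_bounds[OF assms, of E s _ x]
  by (intro conjI LIMSEQ_le_const[OF odometer_approx_tendsto[OF assms]]
      LIMSEQ_le_const2[OF odometer_approx_tendsto[OF assms]]) blast+

lemma abs_truncated_odometer_le: "0 \<le> k \<Longrightarrow> \<bar>truncated_odometer E k s x\<bar> \<le> k"
  using truncated_odometer_bounds[of k E s x] by simp

lemma truncated_odometer_fixpoint:
  assumes "0 \<le> k"
  shows "odometer_step E k s (truncated_odometer E k s) x = truncated_odometer E k s x"
proof -
  have "(\<lambda>n. odometer_step E k s (odometer_approx E k s n) x)
      \<longlonglongrightarrow> odometer_step E k s (truncated_odometer E k s) x"
    unfolding odometer_step_def divide_inverse
    by (intro tendsto_intros odometer_approx_tendsto[OF assms])
  moreover have "(\<lambda>n. odometer_step E k s (odometer_approx E k s n) x)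
      \<longlonglongrightarrow> truncated_odometer E k s x"
    using LIMSEQ_Suc[OF odometer_approx_tendsto[OF assms]] by (simp only: odometer_approx_Suc)
  ultimately show ?thesis
    using LIMSEQ_unique by blast
qed

lemma truncated_odometer_least:
  assumes "0 \<le> k" "\<And>y. 0 \<le> g y" "\<And>y. odometer_step E k s g y \<le> g y"
  shows "truncated_odometer E k s x \<le> g x"
proof -
  have "odometer_approx E k s n y \<le> g y" for n y
  proof (induction n arbitrary: y)
    case 0
    then show ?case
      using assms(2) by (simp add: odometer_approx_0)
  next
    case (Suc n)
    then show ?case
      unfolding odometer_approx_Suc
      using odometer_step_mono[of "odometer_approx E k s n" g] assms(3) order_trans by blast
  qed
  then show ?thesis
    by (intro LIMSEQ_le_const2[OF odometer_approx_tendsto[OF assms(1)]]) auto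
qed

lemma laplacian_neighbours:
  "laplacian E u x = (\<Sum>y\<in>neighbours E x. u y) - real (card (neighbours E x)) * u x"
  unfolding laplacian_def neighbours_def by (simp add: sum_subtractf)

lemma truncated_odometer_le_stabilizer:
  assumes "0 \<le> k" and f_nonneg: "\<And>x. 0 \<le> f x" and f_stab: "\<And>x. s x + laplacian E f x \<le> 1"
  shows "truncated_odometer E k s x \<le> f x"
proof -
  have "truncated_odometer E k s x \<le> min (f x) k"
  proof (rule truncated_odometer_least[OF assms(1)])
    show "0 \<le> min (f y) k" for y
      using assms(1) f_nonneg by simp
    show "odometer_step E k s (\<lambda>x. min (f x) k) y \<le> min (f y) k" for y
    proof -
      let ?d = "real (card (neighbours E y))"
      have capped: "(\<Sum>z\<in>neighbours E y. min (f z) k) \<le> (\<Sum>z\<in>neighbours E y. f z)"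
        by (rule sum_mono) simp
      have superharmonic: "s y - 1 + (\<Sum>z\<in>neighbours E y. f z) \<le> ?d * f y"
        using f_stab[of y] unfolding laplacian_neighbours by linarith
      have "(s y - 1 + (\<Sum>z\<in>neighbours E y. min (f z) k)) / ?d \<le> f y"
      proof (cases "?d = 0")
        case False
        then show ?thesis
          using capped superharmonic by (simp add: divide_le_eq mult.commute)
      qed (use f_nonneg in simp)
      then show ?thesis
        unfolding odometer_step_def using f_nonneg[of y] by linarith
    qed
  qed
  then show ?thesis
    by simp
qed

lemma laplacian_truncated_odometer_le:
  assumes "0 \<le> k" and "finite (neighbours E x)" and "neighbours E x \<noteq> {}"
  shows "laplacian E (truncated_odometer E k s) x
      \<le> (if truncated_odometer E k s x < k then 1 - s x else 0)"
proof -
  let ?h = "truncated_odometer E k s" and ?d = "real (card (neighbours E x))"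
  have d_pos: "?d > 0"
    using assms(2,3) by (simp add: card_gt_0_iff)
  show ?thesis
  proof (cases "?h x < k")
    case True
    then have "(s x - 1 + (\<Sum>y\<in>neighbours E x. ?h y)) / ?d \<le> ?h x"
      using truncated_odometer_fixpoint[OF assms(1), of E s x] unfolding odometer_step_def by linarith
    then have "s x - 1 + (\<Sum>y\<in>neighbours E x. ?h y) \<le> ?d * ?h x"
      using d_pos by (simp add: divide_le_eq mult.commute)
    then show ?thesis
      using True unfolding laplacian_neighbours by simp
  next
    case False
    then have "?h x = k"
      using truncated_odometer_bounds[OF assms(1)] by (meson antisym not_less)
    moreover have "(\<Sum>y\<in>neighbours E x. ?h y) \<le> (\<Sum>y\<in>neighbours E x. k)"
      by (rule sum_mono) (simp add: truncated_odometer_bounds[OF assms(1)])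
    ultimately show ?thesis
      using False unfolding laplacian_neighbours by simp
  qed
qed

lemma neighbours_graph_aut:
  assumes "graph_aut E \<gamma>"
  shows "neighbours E (\<gamma> x) = \<gamma> ` neighbours E x"
proof -
  have b: "bij \<gamma>" and e: "\<And>x y. E x y \<longleftrightarrow> E (\<gamma> x) (\<gamma> y)"
    using assms unfolding graph_aut_def by auto
  show ?thesis
  proof (intro set_eqI iffI)
    fix z
    assume "z \<in> neighbours E (\<gamma> x)"
    moreover have "z = \<gamma> (inv \<gamma> z)"
      using surj_f_inv_f[OF bij_is_surj[OF b]] by simp
    ultimately show "z \<in> \<gamma> ` neighbours E x"
      unfolding neighbours_def using e[of x "inv \<gamma> z"] by auto
  qed (auto simp: neighbours_def e[symmetric])
qed

lemma odometer_approx_graph_aut: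
  assumes "graph_aut E \<gamma>"
  shows "odometer_approx E k (\<lambda>x. s (\<gamma> x)) n x = odometer_approx E k s n (\<gamma> x)"
proof (induction n arbitrary: x)
  case 0
  then show ?case
    by (simp add: odometer_approx_0)
next
  case (Suc n)
  have inj: "inj_on \<gamma> (neighbours E x)"
    using assms unfolding graph_aut_def bij_def by (auto intro: inj_on_subset)
  have "(\<Sum>y\<in>neighbours E (\<gamma> x). odometer_approx E k s n y)
      = (\<Sum>y\<in>neighbours E x. odometer_approx E k (\<lambda>x. s (\<gamma> x)) n y)"
    unfolding neighbours_graph_aut[OF assms] sum.reindex[OF inj] by (simp add: Suc.IH)
  moreover have "card (neighbours E (\<gamma> x)) = card (neighbours E x)"
    unfolding neighbours_graph_aut[OF assms] by (rule card_image[OF inj])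
  ultimately show ?case
    unfolding odometer_approx_Suc odometer_step_def by simp
qed

lemma truncated_odometer_graph_aut:
  assumes "graph_aut E \<gamma>"
  shows "truncated_odometer E k (\<lambda>x. s (\<gamma> x)) x = truncated_odometer E k s (\<gamma> x)"
  unfolding truncated_odometer_def odometer_approx_graph_aut[OF assms] ..

lemma measurable_config_component:
  assumes "sets M = sets (config_space :: ('v \<Rightarrow> real) measure)"
  shows "(\<lambda>s. s x) \<in> borel_measurable M"
proof -
  have "(\<lambda>s::'v \<Rightarrow> real. s x) \<in> borel_measurable config_space"
    unfolding config_space_def by (rule measurable_component_singleton) simp
  then show ?thesis
    using measurable_cong_sets[OF assms refl] by blast
qed

lemma space_config_measure:
  "sets M = sets (config_space :: ('v \<Rightarrow> real) measure) \<Longrightarrow> space M = UNIV"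
  using sets_eq_imp_space_eq by (fastforce simp: config_space_def space_PiM)

lemma measurable_shift:
  assumes "sets M = sets (config_space :: ('v \<Rightarrow> real) measure)"
  shows "shift \<alpha> \<in> measurable M M"
proof -
  have "(\<lambda>s i. s (inv \<alpha> i)) \<in> measurable M config_space"
    unfolding config_space_def
    by (rule measurable_PiM_single') (auto intro: measurable_config_component[OF assms])
  then show ?thesis
    unfolding shift_def using measurable_cong_sets[OF refl assms] by blast
qed

lemma measurable_truncated_odometer:
  assumes "sets M = sets (config_space :: ('v \<Rightarrow> real) measure)" and "0 \<le> k"
  shows "(\<lambda>s. truncated_odometer E k s x) \<in> borel_measurable M"
proof -
  have "(\<lambda>s. odometer_approx E k s n x) \<in> borel_measurable M" for n
  proof (induction n arbitrary: x)
    case 0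
    then show ?case
      by (simp add: odometer_approx_0)
  next
    case (Suc n)
    show ?case
      unfolding odometer_approx_Suc odometer_step_def
      using Suc.IH measurable_config_component[OF assms(1)] by measurable
  qed
  then show ?thesis
    by (rule borel_measurable_LIMSEQ_real[OF odometer_approx_tendsto[OF assms(2)]])
qed

definition eventually_below_cap :: "('v \<Rightarrow> 'v \<Rightarrow> bool) \<Rightarrow> ('v \<Rightarrow> real) set" where
  "eventually_below_cap E =
     {s. \<forall>x. \<forall>\<^sub>F k in sequentially. truncated_odometer E (real k) s x < real k}"

lemma stabilizes_imp_eventually_below_cap:
  assumes "stabilizes E s"
  shows "s \<in> eventually_below_cap E"
proof -
  obtain f where f_nonneg: "\<And>x. 0 \<le> f x" and f_stab: "\<And>x. s x + laplacian E f x \<le> 1"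
    using assms unfolding stabilizes_def by blast
  have "\<forall>\<^sub>F k in sequentially. truncated_odometer E (real k) s x < real k" for x
  proof -
    obtain n :: nat where "f x < real n"
      using reals_Archimedean2 by blast
    moreover have "truncated_odometer E (real k) s x \<le> f x" for k :: nat
      by (rule truncated_odometer_le_stabilizer[OF _ f_nonneg f_stab]) simp
    ultimately show ?thesis
      unfolding eventually_sequentially by (metis le_less_trans less_le_trans of_nat_mono)
  qed
  then show ?thesis
    unfolding eventually_below_cap_def by blast
qed

lemma eventually_below_cap_graph_aut:
  assumes "graph_aut E \<gamma>"
  shows "(\<lambda>x. s (\<gamma> x)) \<in> eventually_below_cap E \<longleftrightarrow> s \<in> eventually_below_cap E"
proof -
  have "surj \<gamma>"
    using assms unfolding graph_aut_def bij_def by simp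
  then have "(\<forall>x. P (\<gamma> x)) \<longleftrightarrow> (\<forall>x. P x)" for P
    by (metis surj_f_inv_f)
  then show ?thesis
    unfolding eventually_below_cap_def mem_Collect_eq truncated_odometer_graph_aut[OF assms] .
qed

lemma countable_vertices:
  fixes E :: "'v \<Rightarrow> 'v \<Rightarrow> bool"
  assumes "connected_graph E" and "locally_finite E"
  shows "countable (UNIV :: 'v set)"
proof -
  fix w :: 'v
  have finite_balls: "finite {y. (E ^^ n) w y}" for n
  proof (induction n)
    case (Suc n)
    have "{y. (E ^^ Suc n) w y} \<subseteq> (\<Union>z\<in>{y. (E ^^ n) w y}. {y. E z y})"
      by (auto elim: relpowp_Suc_E)
    moreover have "finite (\<Union>z\<in>{y. (E ^^ n) w y}. {y. E z y})"
      using Suc assms(2) unfolding locally_finite_def by blast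
    ultimately show ?case
      by (rule finite_subset)
  qed simp
  have "UNIV = (\<Union>n. {y. (E ^^ n) w y})"
    using assms(1) unfolding connected_graph_def rtranclp_power by auto
  also have "countable \<dots>"
    using finite_balls by (intro countable_UN) (auto intro: countable_finite)
  finally show ?thesis .
qed

lemma sets_eventually_below_cap:
  assumes "sets M = sets (config_space :: ('v \<Rightarrow> real) measure)"
    and "countable (UNIV :: 'v set)"
  shows "eventually_below_cap E \<in> sets M"
proof -
  note space = space_config_measure[OF assms(1)]
  have "Measurable.pred M (\<lambda>s. truncated_odometer E (real k) s x < real k)" for k x
    using measurable_truncated_odometer[OF assms(1)] by measurable
  then have "{s \<in> space M. \<forall>x\<in>UNIV. \<exists>n. \<forall>k. n \<le> k \<longrightarrow>
      truncated_odometer E (real k) s x < real k} \<in> sets M"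
    by (intro sets.sets_Collect_countable_All'[OF _ assms(2)] sets.sets_Collect_countable_Ex
        sets.sets_Collect_countable_All sets.sets_Collect_imp) (auto simp: pred_def)
  then show ?thesis
    unfolding eventually_below_cap_def eventually_sequentially space by simp
qed

lemma integral_truncated_odometer_aut:
  assumes "sets M = sets config_space" and "gamma_invariant \<Gamma> M" and "aut_subgroup E \<Gamma>"
    and "\<alpha> \<in> \<Gamma>" and "0 \<le> k"
  shows "(\<integral>s. truncated_odometer E k s (\<alpha> x) \<partial>M) = (\<integral>s. truncated_odometer E k s x \<partial>M)"
proof -
  have aut: "graph_aut E \<alpha>" and inv_in: "inv \<alpha> \<in> \<Gamma>"
    using assms(3,4) unfolding aut_subgroup_def by auto
  then have shift_inv: "shift (inv \<alpha>) s = (\<lambda>x. s (\<alpha> x))" for s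
    unfolding shift_def graph_aut_def by (simp add: inv_inv_eq)
  have "(\<integral>s. truncated_odometer E k s x \<partial>M)
      = (\<integral>s. truncated_odometer E k s x \<partial>distr M M (shift (inv \<alpha>)))"
    using assms(2) inv_in unfolding gamma_invariant_def by simp
  also have "\<dots> = (\<integral>s. truncated_odometer E k (shift (inv \<alpha>) s) x \<partial>M)"
    by (rule integral_distr[OF measurable_shift[OF assms(1)]
          measurable_truncated_odometer[OF assms(1,5)]])
  also have "\<dots> = (\<integral>s. truncated_odometer E k s (\<alpha> x) \<partial>M)"
    unfolding shift_inv truncated_odometer_graph_aut[OF aut] ..
  finally show ?thesis ..
qed

lemma integral_laplacian_truncated_odometer:
  assumes "finite_measure M" and "sets M = sets config_space" and "gamma_invariant \<Gamma> M"
    and "aut_subgroup E \<Gamma>" and "transitive_action \<Gamma>" and "0 \<le> k"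
  shows "(\<integral>s. laplacian E (truncated_odometer E k s) x \<partial>M) = 0"
proof -
  have integrable: "integrable M (\<lambda>s. truncated_odometer E k s y)" for y
    by (intro finite_measure.integrable_const_bound[OF assms(1), where B = k] AE_I2
        measurable_truncated_odometer[OF assms(2,6)]) (simp add: abs_truncated_odometer_le assms(6))
  have same_mean:
    "(\<integral>s. truncated_odometer E k s y \<partial>M) - (\<integral>s. truncated_odometer E k s x \<partial>M) = 0" for y
  proof -
    obtain \<alpha> where "\<alpha> \<in> \<Gamma>" and "\<alpha> x = y"
      using assms(5) unfolding transitive_action_def by blast
    then show ?thesis
      using integral_truncated_odometer_aut[OF assms(2,3,4) \<open>\<alpha> \<in> \<Gamma>\<close> assms(6), of x] by simp
  qed
  have "(\<integral>s. laplacian E (truncated_odometer E k s) x \<partial>M)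
      = (\<Sum>y\<in>{y. E x y}. (\<integral>s. truncated_odometer E k s y \<partial>M) - (\<integral>s. truncated_odometer E k s x \<partial>M))"
    unfolding laplacian_def using integrable by simp
  also have "\<dots> = 0"
    by (intro sum.neutral ballI same_mean)
  finally show ?thesis .
qed

lemma integral_le_one_if_AE_eventually_below_cap:
  assumes "prob_space M" and "sets M = sets config_space" and "gamma_invariant \<Gamma> M"
    and "aut_subgroup E \<Gamma>" and "transitive_action \<Gamma>" and "integrable M (\<lambda>s. s x)"
    and "finite (neighbours E x)" and "neighbours E x \<noteq> {}"
    and "AE s in M. s \<in> eventually_below_cap E"
  shows "(\<integral>s. s x \<partial>M) \<le> 1"
proof -
  interpret prob_space M by fact
  define g where
    "g k s = (if truncated_odometer E (real k) s x < real k then 1 - s x else 0)" for k :: nat and s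
  have "Measurable.pred M (\<lambda>s. truncated_odometer E (real k) s x < real k)" for k
    using measurable_truncated_odometer[OF assms(2)] by measurable
  then have measurable_g: "g k \<in> borel_measurable M" for k
    unfolding g_def[abs_def] pred_def using measurable_config_component[OF assms(2)]
    by (intro measurable_If) auto
  have integrable_diff: "integrable M (\<lambda>s. 1 - s x)"
    using assms(6) by simp
  have g_bound: "norm (g k s) \<le> norm (1 - s x)" for k s
    unfolding g_def by simp
  have "0 \<le> integral\<^sup>L M (g k)" for k
  proof -
    have "(\<integral>s. laplacian E (truncated_odometer E (real k) s) x \<partial>M) \<le> integral\<^sup>L M (g k)"
    proof (rule integral_mono)
      show "integrable M (\<lambda>s. laplacian E (truncated_odometer E (real k) s) x)"
        unfolding laplacian_def
        by (intro Bochner_Integration.integrable_sum Bochner_Integration.integrable_diff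
            integrable_const_bound[where B = "real k"] AE_I2 measurable_truncated_odometer[OF assms(2)])
          (simp_all add: abs_truncated_odometer_le)
      show "integrable M (g k)"
        using g_bound by (intro Bochner_Integration.integrable_bound[OF integrable_diff
            measurable_g] AE_I2)
      show "laplacian E (truncated_odometer E (real k) s) x \<le> g k s" for s
        unfolding g_def by (rule laplacian_truncated_odometer_le[OF _ assms(7,8)]) simp
    qed
    then show ?thesis
      using integral_laplacian_truncated_odometer[OF finite_measure_axioms assms(2-5)] by simp
  qed
  moreover have "(\<lambda>k. integral\<^sup>L M (g k)) \<longlonglongrightarrow> (\<integral>s. 1 - s x \<partial>M)"
  proof (rule integral_dominated_convergence[OF _ measurable_g integrable_norm[OF integrable_diff]])
    show "AE s in M. (\<lambda>k. g k s) \<longlonglongrightarrow> 1 - s x"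
      using assms(9)
    proof (rule AE_mp, intro AE_I2 impI)
      fix s
      assume "s \<in> eventually_below_cap E"
      then have "\<forall>\<^sub>F k in sequentially. truncated_odometer E (real k) s x < real k"
        unfolding eventually_below_cap_def by blast
      then have "\<forall>\<^sub>F k in sequentially. g k s = 1 - s x"
        by (rule eventually_mono) (simp add: g_def)
      then show "(\<lambda>k. g k s) \<longlonglongrightarrow> 1 - s x"
        by (rule tendsto_eventually)
    qed
  qed (use g_bound borel_measurable_integrable[OF integrable_diff] in auto)
  ultimately have "0 \<le> (\<integral>s. 1 - s x \<partial>M)"
    by (intro LIMSEQ_le_const) auto
  also have "\<dots> = 1 - (\<integral>s. s x \<partial>M)"
    using assms(6) by (simp add: prob_space)
  finally show ?thesis
    by simp
qed

lemma neighbours_nonempty: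
  assumes "connected_graph E" and "infinite (UNIV :: 'v set)"
  shows "neighbours E (x :: 'v) \<noteq> {}"
proof -
  have "UNIV \<noteq> {x}"
    using assms(2) by (metis finite.emptyI finite_insert)
  then obtain y :: 'v where "y \<noteq> x"
    by blast
  moreover have "E\<^sup>*\<^sup>* x y"
    using assms(1) unfolding connected_graph_def by simp
  ultimately obtain z where "E x z"
    by (blast elim: converse_rtranclpE)
  then show ?thesis
    unfolding neighbours_def by blast
qed

lemma shift_vimage_eventually_below_cap:
  assumes "aut_subgroup E \<Gamma>" and "\<alpha> \<in> \<Gamma>"
  shows "shift \<alpha> -` eventually_below_cap E = eventually_below_cap E"
proof -
  have "graph_aut E (inv \<alpha>)"
    using assms unfolding aut_subgroup_def by blast
  then show ?thesis
    unfolding shift_def using eventually_below_cap_graph_aut by blast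
qed

theorem lemma4p1:
  fixes E :: "'v \<Rightarrow> 'v \<Rightarrow> bool" and v0 :: 'v and \<Gamma> :: "('v \<Rightarrow> 'v) set"
    and M :: "('v \<Rightarrow> real) measure"
  assumes "simple_graph E" and "infinite (UNIV :: 'v set)" and "connected_graph E"
    and "locally_finite E" and "vertex_transitive E"
    and "aut_subgroup E \<Gamma>" and "transitive_action \<Gamma>"
    and "prob_space M" and "sets M = sets config_space"
    and "gamma_invariant \<Gamma> M" and "gamma_ergodic \<Gamma> M"
    and "integrable M (\<lambda>s. s v0)"
    and "(\<integral>s. s v0 \<partial>M) > 1"
  shows "AE s in M. \<not> stabilizes E s"
proof -
  interpret prob_space M by fact
  let ?B = "eventually_below_cap E"
  have B_sets: "?B \<in> sets M"
    using sets_eventually_below_cap[OF assms(9) countable_vertices[OF assms(3,4)]] .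
  have "\<forall>\<alpha>\<in>\<Gamma>. shift \<alpha> -` ?B \<inter> space M = ?B"
    using shift_vimage_eventually_below_cap[OF assms(6)] space_config_measure[OF assms(9)] by simp
  then have "measure M ?B = 0 \<or> measure M ?B = 1"
    using assms(11) B_sets unfolding gamma_ergodic_def by blast
  moreover have "measure M ?B \<noteq> 1"
  proof
    assume "measure M ?B = 1"
    then have "AE s in M. s \<in> ?B"
      by (rule AE_prob_1)
    moreover have "finite (neighbours E v0)"
      using assms(4) unfolding locally_finite_def neighbours_def by simp
    ultimately have "(\<integral>s. s v0 \<partial>M) \<le> 1"
      by (intro integral_le_one_if_AE_eventually_below_cap[OF assms(8,9,10,6,7,12) _
          neighbours_nonempty[OF assms(3,2)]])
    then show False
      using assms(13) by simp
  qed
  ultimately have "?B \<in> null_sets M"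
    using B_sets by (simp add: emeasure_eq_measure null_sets_def)
  then have "AE s in M. s \<notin> ?B"
    by (rule AE_not_in)
  then show ?thesis
    by (rule AE_mp) (auto intro!: AE_I2 dest: stabilizes_imp_eventually_below_cap)
qed
end
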